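(* Let $N,M_s,M_d\ge1$ be integers, $P_s,\sigma_r^2,\sigma_d^2,\gamma_0>0$, $\varepsilon\ge 0$, $\mathbf H_{sr}\in\mathbb C^{N\times M_s}$ and $\tilde{\mathbf H}_{rd}\in\mathbb C^{M_d\times N}$. Consider the problem $$\mathcal P_2:\ \min_{\mathbf W\in\mathbb C^{N\times N},\,\mathbf b\in\mathbb C^{M_s},\,\mathbf r\in\mathbb C^{M_d},\,P_r}\ P_r$$ subject to $$\min_{\|\Delta \mathbf H\|_F\leq \varepsilon}\frac{P_s|\mathbf r^H(\tilde {\mathbf H}_{rd}+\Delta \mathbf H)\mathbf W\mathbf H_{sr}\mathbf b|^2}{\sigma_r^2\|\mathbf r^H(\tilde {\mathbf H}_{rd}+\Delta \mathbf H)\mathbf W\|_2^2+\sigma_d^2}\geq \gamma_0,$$ $[P_s\mathbf W\mathbf H_{sr}\mathbf b\mathbf b^H\mathbf H_{sr}^H\mathbf W^H+\sigma_r^2\mathbf W\mathbf W^H]_{i,i}\leq P_r$ for $i=1,\dots,N$, $\|\mathbf b\|_2=1$, $\|\mathbf r\|_2=1$ (the inner minimum being over $\Delta\mathbf H\in\mathbb C^{M_d\times N}$). Let $f^\circ$ be the maximum value and $(\mathbf w^\circ,\cdot)$ an optimal solution of $$\max_{\mathbf w\in\mathbb C^N,\ \mathbf r\in\mathbb C^{M_d}}\ |\mathbf r^H\tilde {\mathbf H}_{rd}\mathbf w|-\varepsilon\|\mathbf w\|_2\quad\text{s.t. } |w_i|\le 1\ (i=1,\dots,N),\ \|\mathbf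 r\|_2=1.$$ Then the optimal $(\mathbf W,\mathbf b,\mathbf r)$ of $\mathcal P_2$ are given by $$\mathbf W=\frac{\mathbf w^\circ\mathbf b^{ H}\mathbf H_{sr}^H}{\|\mathbf H_{sr}\mathbf b\|_2\max\{f^\circ, 0\}}\sqrt{\frac{\gamma_0\sigma_d^2}{P_s\|\mathbf H_{sr}\mathbf b\|_2^2-\gamma_0\sigma_r^2}},\quad \mathbf b={\bm \nu}(\mathbf H_{sr}^H\mathbf H_{sr}),\quad \mathbf r=\frac{\tilde {\mathbf H}_{rd}\mathbf w^\circ}{\|\tilde {\mathbf H}_{rd}\mathbf w^\circ\|_2},$$ with the corresponding optimal power $$P_r=\frac{\gamma_0\sigma_d^2(P_s\|\mathbf H_{sr}\mathbf b\|_2^2+\sigma_r^2)}{(P_s\|\mathbf H_{sr}\mathbf b\|_2^2-\gamma_0\sigma_r^2)\max\{f^\circ, 0\}^2}.$$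
   Context: ${\bm \nu}(\mathbf A)$ denotes a unit-norm eigenvector associated with the largest eigenvalue of a Hermitian matrix $\mathbf A$. $[\mathbf A]_{i,i}$ is the $i$-th diagonal entry; $(\cdot)^H$ conjugate transpose; $\|\cdot\|_2$ Euclidean norm; $\|\cdot\|_F$ Frobenius norm; $w_i$ is the $i$-th entry of $\mathbf w$. The setting is a two-hop amplify-and-forward relay: source beamformer $\mathbf b$, relay matrix $\mathbf W$, destination beamformer $\mathbf r$, first-hop channel $\mathbf H_{sr}$, estimated second-hop channel $\tilde{\mathbf H}_{rd}$ with error $\Delta\mathbf H$ bounded by $\varepsilon$, source power $P_s$, per-antenna relay power $P_r$, received SNR target $\gamma_0$, noise variances $\sigma_r^2,\sigma_d^2$. *)

theory Defs
  imports "HOL-Analysis.Analysis"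
begin

text \<open>Complex matrices are Cartesian: an m x n matrix is complex^'n^'m (A $ i $ j).
  The Euclidean norm of a vector is the library norm on complex^'n.\<close>

definition cadj :: "complex^'n^'m \<Rightarrow> complex^'m^'n" where
  "cadj A = (\<chi> i j. cnj (A $ j $ i))"

definition cvcnj :: "complex^'n \<Rightarrow> complex^'n" where
  "cvcnj x = (\<chi> i. cnj (x $ i))"

definition cinner :: "complex^'n \<Rightarrow> complex^'n \<Rightarrow> complex" where
  "cinner r y = (\<Sum>i\<in>UNIV. cnj (r $ i) * y $ i)"

definition outer :: "complex^'n \<Rightarrow> complex^'m \<Rightarrow> complex^'m^'n" where
  "outer x y = (\<chi> i j. x $ i * cnj (y $ j))"

definition frob_norm :: "complex^'n^'m \<Rightarrow> real" where
  "frob_norm A = sqrt (\<Sum>i\<in>UNIV. \<Sum>j\<in>UNIV. (cmod (A $ i $ j))\<^sup>2)"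

definition is_top_eigvec :: "complex^'n^'n \<Rightarrow> complex^'n \<Rightarrow> bool" where
  "is_top_eigvec A v \<longleftrightarrow> norm v = 1 \<and>
     (\<exists>lam::real. A *v v = complex_of_real lam *s v \<and>
        (\<forall>(mu::complex) u. u \<noteq> 0 \<and> A *v u = mu *s u \<longrightarrow> Re mu \<le> lam))"

definition snr :: "real \<Rightarrow> real \<Rightarrow> real \<Rightarrow> complex^'s^'n \<Rightarrow> complex^'n^'d \<Rightarrow> complex^'n^'n
     \<Rightarrow> complex^'s \<Rightarrow> complex^'d \<Rightarrow> real" where
  "snr Ps sr2 sd2 Hsr G W b r =
     Ps * (cmod (cinner r ((G ** W) *v (Hsr *v b))))\<^sup>2 /
     (sr2 * (norm (cvcnj r v* (G ** W)))\<^sup>2 + sd2)"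

text \<open>feasibility of (W, b, r, Pr) for problem P2; the robust constraint
  "min over ||Delta H||_F <= eps of SNR >= gamma0" is written as SNR >= gamma0 for all such Delta H\<close>
definition P2_feasible :: "real \<Rightarrow> real \<Rightarrow> real \<Rightarrow> real \<Rightarrow> real \<Rightarrow> complex^'s^'n \<Rightarrow> complex^'n^'d
     \<Rightarrow> complex^'n^'n \<Rightarrow> complex^'s \<Rightarrow> complex^'d \<Rightarrow> real \<Rightarrow> bool" where
  "P2_feasible Ps sr2 sd2 g0 eps Hsr Hrd W b r Pr \<longleftrightarrow>
     (\<forall>DH::complex^'n^'d. frob_norm DH \<le> eps \<longrightarrow> snr Ps sr2 sd2 Hsr (Hrd + DH) W b r \<ge> g0) \<and>
     (\<forall>i. Re ((Ps *\<^sub>R (W ** Hsr ** outer b b ** cadj Hsr ** cadj W) + sr2 *\<^sub>R (W ** cadj W)) $ i $ i) \<le> Pr) \<and>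
     norm b = 1 \<and> norm r = 1"

definition aux_feasible :: "complex^'n \<Rightarrow> complex^'d \<Rightarrow> bool" where
  "aux_feasible w r \<longleftrightarrow> (\<forall>i. cmod (w $ i) \<le> 1) \<and> norm r = 1"

definition aux_obj :: "real \<Rightarrow> complex^'n^'d \<Rightarrow> complex^'n \<Rightarrow> complex^'d \<Rightarrow> real" where
  "aux_obj eps Hrd w r = cmod (cinner r (Hrd *v w)) - eps * norm w"

end

theory Submission
  imports Defs
begin

text \<open>
  Take any feasible (W, b, r, P) and let y = W H_sr b be the forwarded signal and
  q = r^H H_rd y. The rank-one error r e^H with |e| = eps lowers the useful gain to
  g = |q| - eps |y|, and by Cauchy-Schwarz the amplified relay noise |r^H G W| is at least
  the gain divided by |H_sr b|; so robust feasibility gives g > 0 and a lower bound on g in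
  terms of |H_sr b|. Scaling y down by its peak modulus m yields a feasible point of the
  auxiliary problem, whence g <= m f0, and the power constraint at the peak antenna gives
  P >= Ps m^2 + sr2 m^2 / |H_sr b|^2. Together with |H_sr b| <= |H_sr b0| for the top
  eigenvector b0 of H_sr^H H_sr this yields P >= Pr. Conversely, the rank-one relay
  W = c w0 (H_sr b0)^H with r aligned to H_rd w0 has worst-case gain at least f0 and its
  largest per-antenna power at an entry with |w0_i| = 1, so it attains Pr.
\<close>

section \<open>Complex vectors and matrices\<close>

lemma norm_power2_vec_complex: "(norm (x::complex^'n))\<^sup>2 = (\<Sum>i\<in>UNIV. (cmod (x$i))\<^sup>2)"
  by (simp add: norm_vec_def L2_set_def sum_nonneg)

lemma norm_smult_complex: "norm (c *s (v::complex^'n)) = cmod c * norm v"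
proof -
  have "(norm (c *s v))\<^sup>2 = (cmod c * norm v)\<^sup>2"
    by (simp add: norm_power2_vec_complex norm_mult power_mult_distrib sum_distrib_left)
  then show ?thesis by (rule power2_eq_imp_eq) auto
qed

lemma scaleR_eq_of_real_smult: "c *\<^sub>R (v::complex^'n) = complex_of_real c *s v"
  unfolding vec_eq_iff vector_scaleR_component by (simp add: scaleR_conv_of_real)

lemma matrix_vector_mult_scaleR_right:
  fixes A :: "'a::real_algebra_1^'n^'m"
  shows "A *v (c *\<^sub>R x) = c *\<^sub>R (A *v x)"
  by (simp add: vec_eq_iff matrix_vector_mult_def scaleR_sum_right)

lemma matrix_vector_mult_scaleR_left:
  fixes A :: "'a::real_algebra_1^'n^'m"
  shows "(c *\<^sub>R A) *v x = c *\<^sub>R (A *v x)"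
  by (simp add: vec_eq_iff matrix_vector_mult_def scaleR_sum_right)

lemma cinner_self: "cinner y y = complex_of_real ((norm y)\<^sup>2)"
proof -
  have "complex_of_real ((norm y)\<^sup>2) = (\<Sum>i\<in>UNIV. complex_of_real ((cmod (y$i))\<^sup>2))"
    by (simp only: norm_power2_vec_complex of_real_sum)
  also have "\<dots> = (\<Sum>i\<in>UNIV. cnj (y$i) * y$i)"
    by (simp only: complex_norm_square mult.commute)
  finally show ?thesis by (simp add: cinner_def)
qed

lemma cinner_norm_le: "cmod (cinner r y) \<le> norm r * norm y"
proof -
  have "cmod (cinner r y) \<le> (\<Sum>i\<in>UNIV. cmod (cnj (r$i) * y$i))"
    unfolding cinner_def by (rule norm_sum)
  also have "\<dots> = (\<Sum>i\<in>UNIV. \<bar>cmod (r$i)\<bar> * \<bar>cmod (y$i)\<bar>)"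
    by (simp add: norm_mult)
  also have "\<dots> \<le> L2_set (\<lambda>i. cmod (r$i)) UNIV * L2_set (\<lambda>i. cmod (y$i)) UNIV"
    by (rule L2_set_mult_ineq)
  finally show ?thesis by (simp add: norm_vec_def)
qed

lemma inner_eq_Re_cinner: "(x::complex^'n) \<bullet> y = Re (cinner x y)"
  by (simp add: inner_vec_def cinner_def inner_complex_def Re_sum)

lemma cinner_add_right: "cinner r (x + y) = cinner r x + cinner r y"
  by (simp add: cinner_def distrib_left sum.distrib)

lemma cinner_smult_right: "cinner r (c *s y) = c * cinner r y"
  by (simp add: cinner_def sum_distrib_left algebra_simps)

lemma cinner_smult_left: "cinner (c *s r) y = cnj c * cinner r y"
  by (simp add: cinner_def sum_distrib_left algebra_simps)

lemma cinner_scaleR_right: "cinner r (c *\<^sub>R y) = of_real c * cinner r y"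
  by (simp add: scaleR_eq_of_real_smult cinner_smult_right)

lemma cinner_scaleR_left: "cinner (c *\<^sub>R r) y = of_real c * cinner r y"
  by (simp add: scaleR_eq_of_real_smult cinner_smult_left)

lemma cinner_commute: "cinner y r = cnj (cinner r y)"
  by (simp add: cinner_def mult.commute)

lemma cinner_matrix_vector_mult: "cinner r (M *v y) = cinner (cadj M *v r) y"
proof -
  have "cinner r (M *v y) = (\<Sum>i\<in>UNIV. \<Sum>j\<in>UNIV. cnj (r$i) * (M$i$j * y$j))"
    by (simp add: cinner_def matrix_vector_mult_def sum_distrib_left)
  also have "\<dots> = (\<Sum>j\<in>UNIV. \<Sum>i\<in>UNIV. cnj (r$i) * (M$i$j * y$j))"
    by (rule sum.swap)
  also have "\<dots> = cinner (cadj M *v r) y"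
    by (simp add: cinner_def matrix_vector_mult_def cadj_def sum_distrib_right sum_distrib_left algebra_simps)
  finally show ?thesis .
qed

lemma inner_matrix_vector_mult_cadj: "(H *v v) \<bullet> u = v \<bullet> (cadj H *v (u::complex^'m))"
  by (metis cinner_matrix_vector_mult inner_commute inner_eq_Re_cinner)

lemma norm_cvcnj [simp]: "norm (cvcnj x) = norm x"
  by (simp add: norm_vec_def cvcnj_def)

lemma cvcnj_vector_matrix_mult: "cvcnj r v* M = cvcnj (cadj M *v r)"
  by (simp add: vec_eq_iff cvcnj_def cadj_def vector_matrix_mult_def matrix_vector_mult_def mult.commute)

lemma cadj_matrix_mult: "cadj (A ** B) = cadj B ** cadj A"
  by (simp add: vec_eq_iff cadj_def matrix_matrix_mult_def mult.commute)

lemma cadj_scaleR: "cadj (c *\<^sub>R A) = c *\<^sub>R cadj A"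
  unfolding vec_eq_iff cadj_def vector_scaleR_component by (simp add: scaleR_conv_of_real)

lemma cadj_outer: "cadj (outer u v) = outer v u"
  by (simp add: vec_eq_iff cadj_def outer_def)

lemma outer_matrix_vector_mult: "outer u v *v w = cinner v w *s u"
  by (simp add: vec_eq_iff outer_def matrix_vector_mult_def cinner_def sum_distrib_left algebra_simps)

lemma matrix_mult_outer: "A ** outer u v = outer (A *v u) v"
  by (simp add: vec_eq_iff outer_def matrix_vector_mult_def matrix_matrix_mult_def
      sum_distrib_right sum_distrib_left algebra_simps)

lemma outer_mult_cadj: "outer u v ** cadj N = outer u (N *v v)"
  by (simp add: vec_eq_iff outer_def matrix_vector_mult_def matrix_matrix_mult_def cadj_def
      sum_distrib_left algebra_simps)

lemma outer_row: "outer u v $ i = u$i *s cvcnj v"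
  by (simp add: vec_eq_iff outer_def cvcnj_def)

lemma matrix_vector_mult_component_cinner: "(M *v w)$i = cinner (cvcnj (M$i)) w"
  by (simp add: matrix_vector_mult_def cinner_def cvcnj_def)

lemma frob_norm_outer: "frob_norm (outer u v) = norm u * norm v"
proof -
  have "(\<Sum>i\<in>UNIV. \<Sum>j\<in>UNIV. (cmod (outer u v $ i $ j))\<^sup>2) = (norm u)\<^sup>2 * (norm v)\<^sup>2"
    by (simp add: outer_def norm_power2_vec_complex norm_mult power_mult_distrib sum_product)
  then show ?thesis by (simp add: frob_norm_def real_sqrt_mult)
qed

lemma norm_matrix_vector_mult_le_frob_norm: "norm (M *v w) \<le> frob_norm M * norm w"
proof -
  have row: "(cmod ((M *v w)$i))\<^sup>2 \<le> (norm (M$i))\<^sup>2 * (norm w)\<^sup>2" for i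
    using cinner_norm_le[of "cvcnj (M$i)" w]
    by (simp add: matrix_vector_mult_component_cinner power_mono flip: power_mult_distrib)
  have "(norm (M *v w))\<^sup>2 \<le> (\<Sum>i\<in>UNIV. (norm (M$i))\<^sup>2) * (norm w)\<^sup>2"
    unfolding norm_power2_vec_complex[of "M *v w"] sum_distrib_right by (intro sum_mono row)
  also have "\<dots> = (frob_norm M * norm w)\<^sup>2"
    by (simp add: frob_norm_def norm_power2_vec_complex power_mult_distrib sum_nonneg)
  finally show ?thesis
    by (rule power2_le_imp_le) (simp add: frob_norm_def sum_nonneg)
qed

section \<open>The largest eigenvalue bounds the gain of a matrix\<close>

lemma exists_norm_matrix_vector_mult_maximizer:
  fixes H :: "complex^'s::finite^'n::finite"
  obtains v where "norm v = 1" "\<And>y. (norm (H *v y))\<^sup>2 \<le> (norm (H *v v))\<^sup>2 * (norm y)\<^sup>2"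
proof -
  have "continuous_on (sphere 0 1) (\<lambda>y. norm (H *v y))"
    by (intro continuous_intros matrix_vector_mult_linear_continuous_on)
  moreover have "sphere (0::complex^'s) 1 \<noteq> {}"
    by simp
  ultimately obtain v where v: "v \<in> sphere 0 1"
    and max: "\<And>y. y \<in> sphere 0 1 \<Longrightarrow> norm (H *v y) \<le> norm (H *v v)"
    using continuous_attains_sup[OF compact_sphere] by blast
  have "norm (H *v y) \<le> norm (H *v v) * norm y" for y
  proof (cases "y = 0")
    case False
    then have "norm (H *v ((1 / norm y) *\<^sub>R y)) \<le> norm (H *v v)"
      by (intro max) simp
    with False show ?thesis
      by (simp add: matrix_vector_mult_scaleR_right divide_le_eq mult.commute)
  qed simp
  with v show ?thesis
    by (intro that) (auto simp flip: power_mult_distrib intro: power_mono)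
qed

lemma rayleigh_residual_orthogonal:
  fixes H :: "complex^'s::finite^'n::finite"
  assumes "norm v = 1"
  defines "d \<equiv> cadj H *v (H *v v) - (norm (H *v v))\<^sup>2 *\<^sub>R v"
  shows "v \<bullet> d = 0" "(H *v v) \<bullet> (H *v d) = d \<bullet> d"
proof -
  have "v \<bullet> v = 1"
    using assms by (simp flip: power2_norm_eq_inner)
  moreover have "v \<bullet> (cadj H *v (H *v v)) = (norm (H *v v))\<^sup>2"
    by (simp add: power2_norm_eq_inner flip: inner_matrix_vector_mult_cadj)
  ultimately show vd: "v \<bullet> d = 0"
    by (simp add: d_def inner_diff_right)
  have "(H *v d) \<bullet> (H *v v) = d \<bullet> (cadj H *v (H *v v))"
    by (rule inner_matrix_vector_mult_cadj)
  also have "\<dots> = d \<bullet> (d + (norm (H *v v))\<^sup>2 *\<^sub>R v)"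
    by (simp add: d_def)
  finally show "(H *v v) \<bullet> (H *v d) = d \<bullet> d"
    using vd by (simp add: inner_add_right inner_commute)
qed

lemma norm_matrix_vector_mult_maximizer_eigenvector:
  fixes H :: "complex^'s::finite^'n::finite"
  assumes v1: "norm v = 1"
    and max: "\<And>y. (norm (H *v y))\<^sup>2 \<le> (norm (H *v v))\<^sup>2 * (norm y)\<^sup>2"
  shows "(cadj H ** H) *v v = complex_of_real ((norm (H *v v))\<^sup>2) *s v"
proof -
  define M where "M = (norm (H *v v))\<^sup>2"
  define d where "d = cadj H *v (H *v v) - M *\<^sub>R v"
  define t where "t = 1 / (M + 1)"
  have "M \<ge> 0"
    by (simp add: M_def)
  then have M: "M \<ge> 0" "t > 0" "t * M \<le> 1"
    by (simp_all add: t_def)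
  have "v \<bullet> v = 1"
    using v1 by (simp flip: power2_norm_eq_inner)
  have vd: "v \<bullet> d = 0" and Hvd: "(H *v v) \<bullet> (H *v d) = d \<bullet> d"
    using rayleigh_residual_orthogonal[OF v1, of H] by (simp_all add: d_def M_def)
  \<comment> \<open>Moving from v along the residual d, which is orthogonal to v, would raise the Rayleigh
    quotient at first order by 2 t |d|^2; maximality of v therefore forces d = 0.\<close>
  have quotient_num: "(norm (H *v (v + t *\<^sub>R d)))\<^sup>2 = M + 2 * t * (d \<bullet> d) + t\<^sup>2 * (norm (H *v d))\<^sup>2"
    unfolding M_def power2_norm_eq_inner
    by (simp add: matrix_vector_right_distrib matrix_vector_mult_scaleR_right
        inner_add_left inner_add_right Hvd inner_commute[of "H *v d" "H *v v"] power2_eq_square algebra_simps)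
  have quotient_den: "(norm (v + t *\<^sub>R d))\<^sup>2 = 1 + t\<^sup>2 * (d \<bullet> d)"
    using \<open>v \<bullet> v = 1\<close> vd unfolding power2_norm_eq_inner
    by (simp add: inner_add_left inner_add_right inner_commute[of d v] power2_eq_square)
  have "M + 2 * t * (d \<bullet> d) + t\<^sup>2 * (norm (H *v d))\<^sup>2 \<le> M * (1 + t\<^sup>2 * (d \<bullet> d))"
    using max[of "v + t *\<^sub>R d"] unfolding quotient_num quotient_den M_def .
  moreover have "0 \<le> t\<^sup>2 * (norm (H *v d))\<^sup>2"
    by simp
  moreover have "M * (1 + t\<^sup>2 * (d \<bullet> d)) = M + t * (t * M) * (d \<bullet> d)"
    by (simp add: power2_eq_square algebra_simps)
  ultimately have "2 * t * (d \<bullet> d) \<le> t * (t * M) * (d \<bullet> d)"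
    by linarith
  then have "2 * (d \<bullet> d) \<le> (t * M) * (d \<bullet> d)"
    using M by (simp add: mult.assoc)
  also have "\<dots> \<le> d \<bullet> d"
    using M by (simp add: mult_left_le_one_le)
  finally have "d \<bullet> d = 0"
    using inner_ge_zero[of d] by linarith
  then have "d = 0"
    by simp
  then show ?thesis
    by (simp add: d_def M_def matrix_vector_mul_assoc scaleR_eq_of_real_smult)
qed

lemma norm_matrix_vector_mult_le_top_eigvec:
  fixes H :: "complex^'s::finite^'n::finite"
  assumes b: "is_top_eigvec (cadj H ** H) b" and y: "norm y = 1"
  shows "norm (H *v y) \<le> norm (H *v b)"
proof -
  obtain v where v: "norm v = 1" and max: "\<And>y. (norm (H *v y))\<^sup>2 \<le> (norm (H *v v))\<^sup>2 * (norm y)\<^sup>2"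
    using exists_norm_matrix_vector_mult_maximizer[of H] by blast
  from b obtain lam where b1: "norm b = 1"
    and b_eig: "(cadj H ** H) *v b = complex_of_real lam *s b"
    and top: "\<And>mu u. u \<noteq> 0 \<Longrightarrow> (cadj H ** H) *v u = mu *s u \<Longrightarrow> Re mu \<le> lam"
    unfolding is_top_eigvec_def by blast
  have "(norm (H *v v))\<^sup>2 \<le> lam"
    using top[OF _ norm_matrix_vector_mult_maximizer_eigenvector[OF v max]] v by force
  also have "lam = b \<bullet> ((cadj H ** H) *v b)"
    using b1 by (simp add: b_eig flip: scaleR_eq_of_real_smult power2_norm_eq_inner)
  also have "\<dots> = (norm (H *v b))\<^sup>2"
    by (simp add: power2_norm_eq_inner inner_matrix_vector_mult_cadj matrix_vector_mul_assoc)
  finally show ?thesis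
    using max[of y] y by (simp add: power_mono_iff)
qed

section \<open>Worst-case channel error\<close>

lemma snr_geD:
  assumes snr: "snr Ps sr2 sd2 Hsr G W b r \<ge> g0" and "sr2 \<ge> 0" "sd2 > 0" "g0 > 0"
  defines "N \<equiv> cinner r (G *v (W *v (Hsr *v b)))"
  shows "N \<noteq> 0" "g0 * (sr2 * (cmod N)\<^sup>2 + sd2 * (norm (Hsr *v b))\<^sup>2) \<le> Ps * (cmod N)\<^sup>2 * (norm (Hsr *v b))\<^sup>2"
proof -
  define x where "x = Hsr *v b"
  define U where "U = norm (cadj (G ** W) *v r)"
  have "snr Ps sr2 sd2 Hsr G W b r = Ps * (cmod N)\<^sup>2 / (sr2 * U\<^sup>2 + sd2)"
    by (simp add: snr_def N_def U_def cvcnj_vector_matrix_mult matrix_vector_mul_assoc matrix_mul_assoc)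
  moreover have "sr2 * U\<^sup>2 + sd2 > 0"
    using assms by (simp add: add_nonneg_pos)
  ultimately have snr_bound: "g0 * (sr2 * U\<^sup>2 + sd2) \<le> Ps * (cmod N)\<^sup>2"
    using snr by (simp add: le_divide_eq)
  moreover have "g0 * (sr2 * U\<^sup>2 + sd2) > 0"
    using \<open>sr2 * U\<^sup>2 + sd2 > 0\<close> \<open>g0 > 0\<close> by simp
  ultimately show "N \<noteq> 0"
    by auto
  \<comment> \<open>Cauchy-Schwarz bounds the amplified relay noise from below by the signal gain.\<close>
  have "N = cinner r ((G ** W) *v x)"
    by (simp add: N_def x_def matrix_vector_mul_assoc matrix_mul_assoc)
  also have "\<dots> = cinner (cadj (G ** W) *v r) x"
    by (rule cinner_matrix_vector_mult)
  finally have "cmod N \<le> U * norm x"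
    by (simp add: U_def cinner_norm_le)
  then have "(cmod N)\<^sup>2 \<le> U\<^sup>2 * (norm x)\<^sup>2"
    by (metis norm_ge_zero power_mono power_mult_distrib)
  then have "g0 * (sr2 * (cmod N)\<^sup>2 + sd2 * (norm x)\<^sup>2) \<le> g0 * (sr2 * U\<^sup>2 + sd2) * (norm x)\<^sup>2"
    using assms by (simp add: algebra_simps mult_left_mono)
  also have "\<dots> \<le> Ps * (cmod N)\<^sup>2 * (norm x)\<^sup>2"
    using snr_bound by (simp add: mult_right_mono)
  finally show "g0 * (sr2 * (cmod N)\<^sup>2 + sd2 * (norm (Hsr *v b))\<^sup>2) \<le> Ps * (cmod N)\<^sup>2 * (norm (Hsr *v b))\<^sup>2"
    by (simp add: x_def)
qed

lemma exists_worst_case_error: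
  fixes q :: complex and y :: "complex^'n"
  assumes "eps \<ge> 0"
  obtains e where "norm e \<le> eps" "cmod (q + cinner e y) = max (cmod q - eps * norm y) 0"
proof (cases "q = 0 \<or> y = 0")
  case True
  with assms show ?thesis
    by (intro that[of 0]) (auto simp: cinner_def)
next
  case False
  then have q: "cmod q > 0" and y: "norm y > 0"
    by auto
  define s where "s = min (cmod q) (eps * norm y)"
  define e where "e = (- complex_of_real (s / (cmod q * (norm y)\<^sup>2)) * cnj q) *s y"
  have "cinner e y = - complex_of_real (s / (cmod q * (norm y)\<^sup>2) * (norm y)\<^sup>2) * q"
    unfolding e_def cinner_smult_left cinner_self by simp
  also have "\<dots> = - complex_of_real (s / cmod q) * q"
    using y by simp
  finally have "cinner e y = - complex_of_real (s / cmod q) * q" .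
  then have "q + cinner e y = complex_of_real (1 - s / cmod q) * q"
    by (simp add: algebra_simps)
  moreover have "0 \<le> 1 - s / cmod q"
    using q by (simp add: s_def)
  ultimately have "cmod (q + cinner e y) = (1 - s / cmod q) * cmod q"
    by (simp only: norm_mult norm_of_real abs_of_nonneg)
  also have "\<dots> = cmod q - s"
    using q by (simp add: field_simps)
  finally have "cmod (q + cinner e y) = cmod q - s" .
  moreover have "norm e = s / norm y"
    using assms q y by (simp add: e_def norm_smult_complex norm_mult norm_divide abs_of_nonneg s_def power2_eq_square)
  ultimately show ?thesis
    using assms y by (intro that[of e]) (auto simp: s_def divide_le_eq min_def max_def)
qed

lemma robust_snr_margin:
  assumes "sr2 \<ge> 0" "sd2 > 0" "g0 > 0" "eps \<ge> 0" and r: "norm r = 1"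
    and robust: "\<forall>DH. frob_norm DH \<le> eps \<longrightarrow> snr Ps sr2 sd2 Hsr (Hrd + DH) W b r \<ge> g0"
  defines "y \<equiv> W *v (Hsr *v b)"
  defines "g \<equiv> cmod (cinner r (Hrd *v y)) - eps * norm y"
  shows "g > 0" "g0 * (sr2 * g\<^sup>2 + sd2 * (norm (Hsr *v b))\<^sup>2) \<le> Ps * g\<^sup>2 * (norm (Hsr *v b))\<^sup>2"
proof -
  obtain e where e: "norm e \<le> eps" "cmod (cinner r (Hrd *v y) + cinner e y) = max g 0"
    using exists_worst_case_error \<open>eps \<ge> 0\<close> unfolding g_def by blast
  \<comment> \<open>The rank-one error r e^H realises the worst case.\<close>
  have "frob_norm (outer r e) \<le> eps"
    using e r by (simp add: frob_norm_outer)
  with robust have "snr Ps sr2 sd2 Hsr (Hrd + outer r e) W b r \<ge> g0"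
    by blast
  note snr = snr_geD[OF this \<open>sr2 \<ge> 0\<close> \<open>sd2 > 0\<close> \<open>g0 > 0\<close>, folded y_def]
  have "cinner r ((Hrd + outer r e) *v y) = cinner r (Hrd *v y) + cinner e y"
    using r by (simp add: matrix_vector_mult_add_rdistrib cinner_add_right outer_matrix_vector_mult
        cinner_smult_right cinner_self)
  with snr e(2) have "max g 0 \<noteq> 0"
    "g0 * (sr2 * (max g 0)\<^sup>2 + sd2 * (norm (Hsr *v b))\<^sup>2) \<le> Ps * (max g 0)\<^sup>2 * (norm (Hsr *v b))\<^sup>2"
    by auto
  then show "g > 0" "g0 * (sr2 * g\<^sup>2 + sd2 * (norm (Hsr *v b))\<^sup>2) \<le> Ps * g\<^sup>2 * (norm (Hsr *v b))\<^sup>2"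
    by (simp_all add: max_def split: if_splits)
qed

section \<open>Lower bound on the relay power\<close>

lemma aux_obj_scaleR: "c \<ge> 0 \<Longrightarrow> aux_obj eps Hrd (c *\<^sub>R w) r = c * aux_obj eps Hrd w r"
  by (simp add: aux_obj_def matrix_vector_mult_scaleR_right cinner_scaleR_right norm_mult algebra_simps)

lemma relay_power_diag:
  "Re ((Ps *\<^sub>R (W ** Hsr ** outer b b ** cadj Hsr ** cadj W) + sr2 *\<^sub>R (W ** cadj W)) $ i $ i)
    = Ps * (cmod ((W *v (Hsr *v b))$i))\<^sup>2 + sr2 * (norm (W$i))\<^sup>2"
proof -
  define y where "y = W *v (Hsr *v b)"
  have "W ** Hsr ** outer b b ** cadj Hsr ** cadj W = outer y y"
    by (simp add: matrix_mult_outer outer_mult_cadj y_def matrix_vector_mul_assoc)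
  moreover have "Re (outer y y $ i $ i) = (cmod (y$i))\<^sup>2"
    by (simp add: outer_def complex_norm_square[symmetric] del: of_real_power)
  moreover have "Re ((W ** cadj W) $ i $ i) = (norm (W$i))\<^sup>2"
    by (simp add: matrix_matrix_mult_def cadj_def norm_power2_vec_complex Re_sum
        complex_norm_square[symmetric] del: of_real_power)
  ultimately show ?thesis
    by (simp add: y_def)
qed

definition peak_modulus :: "complex^'n \<Rightarrow> real" where
  "peak_modulus y = Max (range (\<lambda>i. cmod (y$i)))"

lemma peak_modulus_ge: "cmod (y$i) \<le> peak_modulus y"
  by (simp add: peak_modulus_def)

lemma peak_modulus_attained: "\<exists>i. peak_modulus y = cmod (y$i)"
proof -
  have "Max (range (\<lambda>i. cmod (y$i))) \<in> range (\<lambda>i. cmod (y$i))"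
    by (rule Max_in) auto
  then show ?thesis
    by (simp add: peak_modulus_def image_iff)
qed

lemma peak_modulus_pos: "y \<noteq> 0 \<Longrightarrow> peak_modulus y > 0"
  by (metis peak_modulus_ge vec_eq_iff zero_index zero_less_norm_iff order_less_le_trans)

lemma aux_obj_le_peak_modulus_mult:
  assumes opt_max: "\<forall>w r. aux_feasible w r \<longrightarrow> aux_obj eps Hrd w r \<le> aux_obj eps Hrd w0 r0"
    and r: "norm r = 1"
  shows "aux_obj eps Hrd y r \<le> peak_modulus y * aux_obj eps Hrd w0 r0"
proof (cases "y = 0")
  case True
  then show ?thesis
    by (simp add: aux_obj_def peak_modulus_def cinner_def)
next
  case False
  define m where "m = peak_modulus y"
  have m: "m > 0"
    using False by (simp add: m_def peak_modulus_pos)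
  then have "aux_feasible ((1 / m) *\<^sub>R y) r"
    using r peak_modulus_ge[of y] by (simp add: aux_feasible_def m_def divide_le_eq)
  moreover have "aux_obj eps Hrd y r = m * aux_obj eps Hrd ((1 / m) *\<^sub>R y) r"
    using m by (simp flip: aux_obj_scaleR)
  ultimately show ?thesis
    using opt_max m by (simp add: m_def mult_left_mono)
qed

lemma relay_power_ge_peak_modulus:
  assumes power: "\<forall>i. Re ((Ps *\<^sub>R (W ** Hsr ** outer b b ** cadj Hsr ** cadj W) + sr2 *\<^sub>R (W ** cadj W)) $ i $ i) \<le> P"
    and "sr2 \<ge> 0"
  defines "m \<equiv> peak_modulus (W *v (Hsr *v b))"
  shows "Ps * m\<^sup>2 + sr2 * m\<^sup>2 / (norm (Hsr *v b))\<^sup>2 \<le> P"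
proof -
  obtain i where i: "m = cmod ((W *v (Hsr *v b))$i)"
    using peak_modulus_attained m_def by blast
  then have "m \<le> norm (W$i) * norm (Hsr *v b)"
    using cinner_norm_le[of "cvcnj (W$i)"] by (simp add: matrix_vector_mult_component_cinner)
  then have "m\<^sup>2 \<le> (norm (W$i))\<^sup>2 * (norm (Hsr *v b))\<^sup>2"
    using i by (metis norm_ge_zero power_mono power_mult_distrib)
  then have "m\<^sup>2 / (norm (Hsr *v b))\<^sup>2 \<le> (norm (W$i))\<^sup>2"
    by (cases "Hsr *v b = 0") (simp_all add: divide_le_eq)
  then have "Ps * m\<^sup>2 + sr2 * m\<^sup>2 / (norm (Hsr *v b))\<^sup>2 \<le> Ps * m\<^sup>2 + sr2 * (norm (W$i))\<^sup>2"
    using \<open>sr2 \<ge> 0\<close> by (simp add: mult_left_mono flip: times_divide_eq_right)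
  also have "\<dots> \<le> P"
    using power i by (simp only: relay_power_diag)
  finally show ?thesis .
qed

definition min_relay_power :: "real \<Rightarrow> real \<Rightarrow> real \<Rightarrow> real \<Rightarrow> real \<Rightarrow> real \<Rightarrow> real" where
  "min_relay_power Ps sr2 sd2 g0 h f = g0 * sd2 * (Ps * h\<^sup>2 + sr2) / ((Ps * h\<^sup>2 - g0 * sr2) * f\<^sup>2)"

lemma min_relay_power_antimono:
  assumes "Ps \<ge> 0" "sr2 \<ge> 0" "sd2 \<ge> 0" "g0 \<ge> 0"
    and "Ps * h'\<^sup>2 - g0 * sr2 > 0" "0 \<le> h'" "h' \<le> h"
  shows "min_relay_power Ps sr2 sd2 g0 h f \<le> min_relay_power Ps sr2 sd2 g0 h' f"
proof -
  have "h'\<^sup>2 \<le> h\<^sup>2"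
    using assms by (simp add: power_mono)
  then have "Ps * h'\<^sup>2 \<le> Ps * h\<^sup>2"
    using assms by (simp add: mult_left_mono)
  moreover have "(Ps * h'\<^sup>2 + sr2) * (Ps * h\<^sup>2 - g0 * sr2) - (Ps * h\<^sup>2 + sr2) * (Ps * h'\<^sup>2 - g0 * sr2)
      = Ps * sr2 * (1 + g0) * (h\<^sup>2 - h'\<^sup>2)"
    by (simp add: algebra_simps)
  moreover have "0 \<le> Ps * sr2 * (1 + g0) * (h\<^sup>2 - h'\<^sup>2)"
    using assms \<open>h'\<^sup>2 \<le> h\<^sup>2\<close> by simp
  ultimately have "(Ps * h\<^sup>2 + sr2) * (Ps * h'\<^sup>2 - g0 * sr2) \<le> (Ps * h'\<^sup>2 + sr2) * (Ps * h\<^sup>2 - g0 * sr2)"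
    by linarith
  with assms \<open>Ps * h'\<^sup>2 \<le> Ps * h\<^sup>2\<close>
  have "(Ps * h\<^sup>2 + sr2) / (Ps * h\<^sup>2 - g0 * sr2) \<le> (Ps * h'\<^sup>2 + sr2) / (Ps * h'\<^sup>2 - g0 * sr2)"
    by (simp add: divide_simps)
  then show ?thesis
    unfolding min_relay_power_def using assms
    by (simp add: divide_right_mono mult_left_mono flip: times_divide_eq_right divide_divide_eq_left)
qed

lemma min_relay_power_le_of_margin:
  fixes Ps sr2 sd2 g0 h g m f P :: real
  assumes "Ps \<ge> 0" "sr2 \<ge> 0" "sd2 > 0" "g0 > 0" "h > 0" "g > 0" "m \<ge> 0"
    and margin: "g0 * (sr2 * g\<^sup>2 + sd2 * h\<^sup>2) \<le> Ps * g\<^sup>2 * h\<^sup>2"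
    and gain: "g \<le> m * f"
    and power: "Ps * m\<^sup>2 + sr2 * m\<^sup>2 / h\<^sup>2 \<le> P"
  shows "f > 0" "Ps * h\<^sup>2 - g0 * sr2 > 0" "min_relay_power Ps sr2 sd2 g0 h f \<le> P"
proof -
  show "f > 0"
    using assms by (smt (verit) mult_nonneg_nonpos)
  then have "g\<^sup>2 \<le> m\<^sup>2 * f\<^sup>2"
    using gain \<open>g > 0\<close> by (metis less_imp_le power_mono power_mult_distrib)
  define a where "a = Ps * h\<^sup>2 - g0 * sr2"
  have scaled_margin: "g0 * sd2 * h\<^sup>2 \<le> g\<^sup>2 * a"
    using margin by (simp add: a_def algebra_simps)
  moreover have "0 < g0 * sd2 * h\<^sup>2"
    using assms by simp
  ultimately show a: "Ps * h\<^sup>2 - g0 * sr2 > 0"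
    using \<open>g > 0\<close> by (metis a_def less_le_trans zero_less_mult_iff zero_less_power2 not_less_iff_gr_or_eq)
  have "min_relay_power Ps sr2 sd2 g0 h f = (g0 * sd2 / a) * ((Ps * h\<^sup>2 + sr2) / f\<^sup>2)"
    by (simp add: min_relay_power_def a_def)
  also have "\<dots> \<le> (g\<^sup>2 / h\<^sup>2) * ((Ps * h\<^sup>2 + sr2) / f\<^sup>2)"
    using scaled_margin a assms by (intro mult_right_mono) (simp_all add: a_def divide_simps mult.commute)
  also have "\<dots> \<le> (m\<^sup>2 * f\<^sup>2 / h\<^sup>2) * ((Ps * h\<^sup>2 + sr2) / f\<^sup>2)"
    using \<open>g\<^sup>2 \<le> m\<^sup>2 * f\<^sup>2\<close> assms by (intro mult_right_mono divide_right_mono) simp_all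
  also have "\<dots> = Ps * m\<^sup>2 + sr2 * m\<^sup>2 / h\<^sup>2"
    using \<open>f > 0\<close> \<open>h > 0\<close> by (simp add: field_simps)
  finally show "min_relay_power Ps sr2 sd2 g0 h f \<le> P"
    using power by linarith
qed

lemma P2_feasible_imp_min_relay_power_le:
  assumes "Ps > 0" "sr2 > 0" "sd2 > 0" "g0 > 0" "eps \<ge> 0"
    and opt_max: "\<forall>w r. aux_feasible w r \<longrightarrow> aux_obj eps Hrd w r \<le> aux_obj eps Hrd w0 r0"
    and b_eig: "is_top_eigvec (cadj Hsr ** Hsr) b"
    and feasible: "P2_feasible Ps sr2 sd2 g0 eps Hsr Hrd W b' r' P"
  defines "f0 \<equiv> aux_obj eps Hrd w0 r0" and "h \<equiv> norm (Hsr *v b)"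
  shows "f0 > 0" "Ps * h\<^sup>2 - g0 * sr2 > 0" "min_relay_power Ps sr2 sd2 g0 h f0 \<le> P"
proof -
  from feasible have robust: "\<forall>DH. frob_norm DH \<le> eps \<longrightarrow> snr Ps sr2 sd2 Hsr (Hrd + DH) W b' r' \<ge> g0"
    and power: "\<forall>i. Re ((Ps *\<^sub>R (W ** Hsr ** outer b' b' ** cadj Hsr ** cadj W) + sr2 *\<^sub>R (W ** cadj W)) $ i $ i) \<le> P"
    and "norm b' = 1" "norm r' = 1"
    unfolding P2_feasible_def by auto
  define x where "x = Hsr *v b'"
  define y where "y = W *v x"
  define g where "g = cmod (cinner r' (Hrd *v y)) - eps * norm y"
  have g: "g > 0" and margin: "g0 * (sr2 * g\<^sup>2 + sd2 * (norm x)\<^sup>2) \<le> Ps * g\<^sup>2 * (norm x)\<^sup>2"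
    using robust_snr_margin[of sr2 sd2 g0 eps r'] assms robust \<open>norm r' = 1\<close>
    unfolding g_def y_def x_def by auto
  then have "y \<noteq> 0"
    by (auto simp: g_def cinner_def)
  then have "norm x > 0"
    by (auto simp: y_def)
  define m where "m = peak_modulus y"
  have "m \<ge> 0"
    using peak_modulus_ge[of y] by (metis m_def norm_ge_zero order_trans)
  have gain: "g \<le> m * f0"
    using aux_obj_le_peak_modulus_mult[OF opt_max \<open>norm r' = 1\<close>, of y]
    by (simp add: g_def f0_def m_def aux_obj_def)
  have "Ps * m\<^sup>2 + sr2 * m\<^sup>2 / (norm x)\<^sup>2 \<le> P"
    using relay_power_ge_peak_modulus[OF power] \<open>sr2 > 0\<close> by (simp add: m_def y_def x_def)
  with assms \<open>norm x > 0\<close> g \<open>m \<ge> 0\<close> margin gain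
  have "f0 > 0" and x: "Ps * (norm x)\<^sup>2 - g0 * sr2 > 0" and "min_relay_power Ps sr2 sd2 g0 (norm x) f0 \<le> P"
    using min_relay_power_le_of_margin[of Ps sr2 sd2 g0 "norm x" g m f0 P] by simp_all
  then show "f0 > 0"
    by simp
  have "norm x \<le> h"
    unfolding x_def h_def using b_eig \<open>norm b' = 1\<close> by (rule norm_matrix_vector_mult_le_top_eigvec)
  then have "Ps * (norm x)\<^sup>2 \<le> Ps * h\<^sup>2"
    using \<open>Ps > 0\<close> by (simp add: power_mono)
  with x show "Ps * h\<^sup>2 - g0 * sr2 > 0"
    by linarith
  show "min_relay_power Ps sr2 sd2 g0 h f0 \<le> P"
    using min_relay_power_antimono[of Ps sr2 sd2 g0 "norm x" h f0] assms x \<open>norm x \<le> h\<close>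
      \<open>min_relay_power Ps sr2 sd2 g0 (norm x) f0 \<le> P\<close>
    by simp
qed

section \<open>The rank-one relay attains the bound\<close>

lemma snr_rank_one_relay:
  fixes Hsr :: "complex^'s::finite^'n::finite" and G :: "complex^'n^'d::finite"
    and b :: "complex^'s" and w :: "complex^'n" and r :: "complex^'d" and c :: real
  assumes "c \<ge> 0"
  defines "h \<equiv> norm (Hsr *v b)" and "s \<equiv> (c * cmod (cinner r (G *v w)) * norm (Hsr *v b))\<^sup>2"
  shows "snr Ps sr2 sd2 Hsr G (c *\<^sub>R outer w (Hsr *v b)) b r = Ps * h\<^sup>2 * s / (sr2 * s + sd2)"
proof -
  define x where "x = Hsr *v b"
  define a where "a = cinner r (G *v w)"
  have "(c *\<^sub>R outer w x) *v x = (c * h\<^sup>2) *\<^sub>R w"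
    by (simp add: matrix_vector_mult_scaleR_left outer_matrix_vector_mult cinner_self h_def x_def
        scaleR_eq_of_real_smult)
  then have num: "(cmod (cinner r ((G ** c *\<^sub>R outer w x) *v x)))\<^sup>2 = h\<^sup>2 * s"
    using assms by (simp add: s_def a_def flip: matrix_vector_mul_assoc)
      (simp add: matrix_vector_mult_scaleR_right cinner_scaleR_right norm_mult power_mult_distrib
        abs_of_nonneg power2_eq_square)
  have "cinner w (cadj G *v r) = cnj a"
    by (simp add: a_def cinner_matrix_vector_mult[of r G w] cinner_commute[of w])
  then have "cadj (G ** c *\<^sub>R outer w x) *v r = c *\<^sub>R (cnj a *s x)"
    by (simp add: cadj_matrix_mult cadj_scaleR cadj_outer matrix_vector_mult_scaleR_left
        outer_matrix_vector_mult flip: matrix_vector_mul_assoc)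
  then have den: "(norm (cvcnj r v* (G ** c *\<^sub>R outer w x)))\<^sup>2 = s"
    using assms by (simp add: cvcnj_vector_matrix_mult norm_smult_complex a_def s_def h_def x_def
        power_mult_distrib)
  show ?thesis
    unfolding snr_def x_def[symmetric] num den by (simp add: mult.assoc)
qed

lemma snr_rank_one_relay_ge:
  fixes Hsr :: "complex^'s::finite^'n::finite" and G :: "complex^'n^'d::finite"
    and b :: "complex^'s" and w :: "complex^'n" and r :: "complex^'d" and c :: real
  assumes "c \<ge> 0" "Ps \<ge> 0" "sr2 \<ge> 0" "sd2 > 0"
    and margin: "Ps * (norm (Hsr *v b))\<^sup>2 - g0 * sr2 > 0"
    and gain: "g0 * sd2 / (Ps * (norm (Hsr *v b))\<^sup>2 - g0 * sr2) \<le> (c * cmod (cinner r (G *v w)) * norm (Hsr *v b))\<^sup>2"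
  shows "g0 \<le> snr Ps sr2 sd2 Hsr G (c *\<^sub>R outer w (Hsr *v b)) b r"
proof -
  define h where "h = norm (Hsr *v b)"
  define s where "s = (c * cmod (cinner r (G *v w)) * h)\<^sup>2"
  have "g0 * sd2 \<le> s * (Ps * h\<^sup>2 - g0 * sr2)"
    using gain margin by (simp add: s_def h_def divide_le_eq)
  moreover have "sr2 * s + sd2 > 0"
    using assms by (simp add: s_def add_nonneg_pos)
  ultimately have "g0 \<le> Ps * h\<^sup>2 * s / (sr2 * s + sd2)"
    by (simp add: le_divide_eq algebra_simps)
  then show ?thesis
    by (simp add: s_def h_def snr_rank_one_relay[OF \<open>c \<ge> 0\<close>])
qed

lemma relay_power_rank_one:
  assumes c: "c \<ge> 0" and W: "W = c *\<^sub>R outer w (Hsr *v b)"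
  shows "Re ((Ps *\<^sub>R (W ** Hsr ** outer b b ** cadj Hsr ** cadj W) + sr2 *\<^sub>R (W ** cadj W)) $ i $ i)
    = (c * cmod (w$i) * norm (Hsr *v b))\<^sup>2 * (Ps * (norm (Hsr *v b))\<^sup>2 + sr2)"
proof -
  define x where "x = Hsr *v b"
  have Wx: "W *v x = (c * (norm x)\<^sup>2) *\<^sub>R w"
    by (simp add: W x_def matrix_vector_mult_scaleR_left outer_matrix_vector_mult cinner_self
        scaleR_eq_of_real_smult)
  have Wi: "norm (W $ i) = c * cmod (w$i) * norm x"
    using c by (simp add: W x_def outer_row norm_smult_complex)
  show ?thesis
    unfolding relay_power_diag x_def[symmetric] Wx Wi using c
    by (simp add: norm_mult power_mult_distrib power2_eq_square algebra_simps)
qed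

lemma aux_obj_le_cinner_perturbed:
  assumes "norm r0 = 1" "frob_norm DH \<le> eps"
  shows "aux_obj eps Hrd w r0 \<le> cmod (cinner ((1 / norm (Hrd *v w)) *\<^sub>R (Hrd *v w)) ((Hrd + DH) *v w))"
proof -
  define n where "n = norm (Hrd *v w)"
  define r where "r = (1 / n) *\<^sub>R (Hrd *v w)"
  have "norm r \<le> 1"
    by (simp add: r_def n_def)
  have "cinner r (Hrd *v w) = complex_of_real n"
    by (simp add: r_def n_def cinner_scaleR_left cinner_self power2_eq_square)
  moreover have "cmod (cinner r (DH *v w)) \<le> eps * norm w"
  proof -
    have "cmod (cinner r (DH *v w)) \<le> norm r * norm (DH *v w)"
      by (rule cinner_norm_le)
    also have "\<dots> \<le> norm (DH *v w)"
      using \<open>norm r \<le> 1\<close> by (simp add: mult_left_le_one_le)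
    also have "\<dots> \<le> frob_norm DH * norm w"
      by (rule norm_matrix_vector_mult_le_frob_norm)
    also have "\<dots> \<le> eps * norm w"
      using assms by (simp add: mult_right_mono)
    finally show ?thesis .
  qed
  ultimately have "n - eps * norm w \<le> cmod (cinner r ((Hrd + DH) *v w))"
    using norm_diff_ineq[of "complex_of_real n" "cinner r (DH *v w)"]
    by (simp add: matrix_vector_mult_add_rdistrib cinner_add_right n_def)
  moreover have "cmod (cinner r0 (Hrd *v w)) \<le> n"
    using cinner_norm_le[of r0] assms by (simp add: n_def)
  ultimately show ?thesis
    by (simp add: aux_obj_def r_def n_def)
qed

lemma P2_feasible_rank_one_relay:
  fixes Hsr :: "complex^'s::finite^'n::finite" and Hrd :: "complex^'n^'d::finite"
    and w0 :: "complex^'n" and r0 :: "complex^'d" and b :: "complex^'s" and eps :: real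
  defines "f0 \<equiv> aux_obj eps Hrd w0 r0" and "h \<equiv> norm (Hsr *v b)"
  assumes "Ps > 0" "sr2 > 0" "sd2 > 0" "g0 > 0" "eps \<ge> 0"
    and w0: "aux_feasible w0 r0" and b: "norm b = 1"
    and f0: "f0 > 0" and margin: "Ps * h\<^sup>2 - g0 * sr2 > 0"
  shows "P2_feasible Ps sr2 sd2 g0 eps Hsr Hrd
     ((sqrt (g0 * sd2 / (Ps * h\<^sup>2 - g0 * sr2)) / (h * f0)) *\<^sub>R (outer w0 b ** cadj Hsr)) b
     ((1 / norm (Hrd *v w0)) *\<^sub>R (Hrd *v w0)) (min_relay_power Ps sr2 sd2 g0 h f0)"
proof -
  define K where "K = g0 * sd2 / (Ps * h\<^sup>2 - g0 * sr2)"
  define c where "c = sqrt K / (h * f0)"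
  define W where "W = c *\<^sub>R outer w0 (Hsr *v b)"
  define r where "r = (1 / norm (Hrd *v w0)) *\<^sub>R (Hrd *v w0)"
  have "h > 0"
    using margin assms by (smt (verit) h_def mult_nonneg_nonneg norm_ge_zero power2_eq_square zero_less_mult_iff)
  have "K > 0"
    using margin assms by (simp add: K_def)
  have c: "c > 0" "(c * f0 * h)\<^sup>2 = K"
    using \<open>K > 0\<close> \<open>h > 0\<close> f0 by (simp_all add: c_def power_mult_distrib power_divide)
  have "norm r0 = 1" and w0_le: "\<And>i. cmod (w0$i) \<le> 1"
    using w0 by (auto simp: aux_feasible_def)
  then have cinner_ge: "f0 \<le> cmod (cinner r ((Hrd + DH) *v w0))" if "frob_norm DH \<le> eps" for DH
    using that aux_obj_le_cinner_perturbed unfolding f0_def r_def by blast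
  have "norm r = 1"
    using cinner_ge[of 0] f0 \<open>eps \<ge> 0\<close> by (auto simp: r_def frob_norm_def cinner_def)
  have "snr Ps sr2 sd2 Hsr (Hrd + DH) W b r \<ge> g0" if "frob_norm DH \<le> eps" for DH
  proof -
    have "K \<le> (c * cmod (cinner r ((Hrd + DH) *v w0)) * h)\<^sup>2"
      unfolding c(2)[symmetric] using cinner_ge[OF that] c f0 \<open>h > 0\<close>
      by (intro power_mono mult_right_mono mult_left_mono) auto
    then show ?thesis
      unfolding W_def using snr_rank_one_relay_ge[of c Ps sr2 sd2 Hsr b g0] c(1) margin assms
      by (simp add: K_def h_def)
  qed
  moreover have "Re ((Ps *\<^sub>R (W ** Hsr ** outer b b ** cadj Hsr ** cadj W) + sr2 *\<^sub>R (W ** cadj W)) $ i $ i)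
      \<le> min_relay_power Ps sr2 sd2 g0 h f0" for i
  proof -
    have "Re ((Ps *\<^sub>R (W ** Hsr ** outer b b ** cadj Hsr ** cadj W) + sr2 *\<^sub>R (W ** cadj W)) $ i $ i)
        = (c * cmod (w0$i) * h)\<^sup>2 * (Ps * h\<^sup>2 + sr2)"
      unfolding h_def by (rule relay_power_rank_one[OF less_imp_le[OF c(1)] W_def])
    also have "\<dots> \<le> (c * h)\<^sup>2 * (Ps * h\<^sup>2 + sr2)"
      using w0_le[of i] c \<open>h > 0\<close> assms
      by (intro mult_right_mono power_mono) (auto simp: mult_right_le_one_le)
    also have "(c * h)\<^sup>2 = K / f0\<^sup>2"
      using c(2) f0 by (simp add: eq_divide_eq power_mult_distrib mult_ac)
    finally show ?thesis
      by (simp add: min_relay_power_def K_def)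
  qed
  moreover have "W = (sqrt (g0 * sd2 / (Ps * h\<^sup>2 - g0 * sr2)) / (h * f0)) *\<^sub>R (outer w0 b ** cadj Hsr)"
    by (simp add: W_def c_def K_def outer_mult_cadj)
  ultimately show ?thesis
    using b \<open>norm r = 1\<close> by (simp add: P2_feasible_def r_def)
qed

theorem theorem2:
  fixes Hsr :: "complex^'s::finite^'n::finite" and Hrd :: "complex^'n^'d::finite"
    and Ps sr2 sd2 g0 eps :: real
    and w0 :: "complex^'n" and r0 :: "complex^'d" and b :: "complex^'s"
  assumes "Ps > 0" "sr2 > 0" "sd2 > 0" "g0 > 0" "eps \<ge> 0"
    and opt_feas: "aux_feasible w0 r0"
    and opt_max: "\<forall>w r. aux_feasible w r \<longrightarrow> aux_obj eps Hrd w r \<le> aux_obj eps Hrd w0 r0"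
    and b_eig: "is_top_eigvec (cadj Hsr ** Hsr) b"
    and P2_feas: "\<exists>W b' r' P. P2_feasible Ps sr2 sd2 g0 eps Hsr Hrd W b' r' P"
  shows "let f0 = aux_obj eps Hrd w0 r0;
             h = norm (Hsr *v b);
             W = (sqrt (g0 * sd2 / (Ps * h\<^sup>2 - g0 * sr2)) / (h * max f0 0))
                   *\<^sub>R (outer w0 b ** cadj Hsr);
             r = (1 / norm (Hrd *v w0)) *\<^sub>R (Hrd *v w0);
             Pr = g0 * sd2 * (Ps * h\<^sup>2 + sr2) / ((Ps * h\<^sup>2 - g0 * sr2) * (max f0 0)\<^sup>2)
         in P2_feasible Ps sr2 sd2 g0 eps Hsr Hrd W b r Pr \<and>
            (\<forall>W' b' r' P'. P2_feasible Ps sr2 sd2 g0 eps Hsr Hrd W' b' r' P' \<longrightarrow> Pr \<le> P')"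
proof -
  note pos = assms(1-5)
  note lower_bound = P2_feasible_imp_min_relay_power_le[OF pos opt_max b_eig]
  from P2_feas obtain W b' r' P where "P2_feasible Ps sr2 sd2 g0 eps Hsr Hrd W b' r' P"
    by blast
  note f0_h = lower_bound(1,2)[OF this]
  have "norm b = 1"
    using b_eig by (simp add: is_top_eigvec_def)
  have "max (aux_obj eps Hrd w0 r0) 0 = aux_obj eps Hrd w0 r0"
    using f0_h by simp
  then show ?thesis
    unfolding Let_def min_relay_power_def[symmetric]
    using P2_feasible_rank_one_relay[OF pos opt_feas \<open>norm b = 1\<close> f0_h] lower_bound(3) by simp
qed

end
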